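(* Let $e=2.718281\ldots$ be Euler's number, and let $s_k/t_k$, $k\ge 0$, be the convergents of its regular continued fraction expansion. Then the Jacobi sequence of $e$ is purely periodic with period length $24$, i.e. $$\left(\frac{s_k}{t_k}\right)=\left(\frac{s_{k+24}}{t_{k+24}}\right)\quad\text{for all } k\ge 0,$$ and $24$ is the smallest positive integer $L$ with $\left(\frac{s_k}{t_k}\right)=\left(\frac{s_{k+L}}{t_{k+L}}\right)$ for all $k\ge 0$.
   Context: For $x\in\mathbb{R}\setminus\mathbb{Q}$ with regular continued fraction expansion $x=[a_0,a_1,a_2,\ldots]$ ($a_0\in\mathbb{Z}$, $a_i\ge 1$ for $i\ge1$), the convergents $s_k/t_k$ are defined by $s_{-1}=1$, $s_0=a_0$, $s_k=a_ks_{k-1}+s_{k-2}$ and $t_{-1}=0$, $t_0=1$, $t_k=a_kt_{k-1}+t_{k-2}$ for $k\ge1$. For an odd natural number $n$ and an integer $m$ coprime to $n$, $\left(\frac{m}{n}\right)$ is the usual Jacobi symbol (equal to $1$ when $n=1$, e.g. $m=0,n=1$). If $n$ is even and $\gcd(m,n)=1$, one sets $\left(\frac{m}{n}\right)=*$, where $*$ is a fixed symbol different from $\pm1$. The Jacobi sequence of $x$ is the sequence $\left(\frac{s_k}{t_k}\right)$, $k\ge 0$, with values in $\{1,-1,*\}$. *)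

theory Defs
  imports Complex_Main "HOL-Number_Theory.Number_Theory"
begin

fun cf_rem :: "real \<Rightarrow> nat \<Rightarrow> real" where
  "cf_rem x 0 = x"
| "cf_rem x (Suc k) = 1 / (cf_rem x k - of_int \<lfloor>cf_rem x k\<rfloor>)"

definition cf_a :: "real \<Rightarrow> nat \<Rightarrow> int" where
  "cf_a x k = \<lfloor>cf_rem x k\<rfloor>"

text \<open>Numerators s_k and denominators t_k of the convergents, with
  s_(-1) = 1, s_0 = a_0, t_(-1) = 0, t_0 = 1 built in.\<close>

fun cf_s :: "real \<Rightarrow> nat \<Rightarrow> int" where
  "cf_s x 0 = cf_a x 0"
| "cf_s x (Suc 0) = cf_a x 1 * cf_a x 0 + 1"
| "cf_s x (Suc (Suc k)) = cf_a x (Suc (Suc k)) * cf_s x (Suc k) + cf_s x k"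

fun cf_t :: "real \<Rightarrow> nat \<Rightarrow> int" where
  "cf_t x 0 = 1"
| "cf_t x (Suc 0) = cf_a x 1"
| "cf_t x (Suc (Suc k)) = cf_a x (Suc (Suc k)) * cf_t x (Suc k) + cf_t x k"

definition jacobi :: "int \<Rightarrow> int \<Rightarrow> int" where
  "jacobi m n = prod_mset (image_mset (\<lambda>p. Legendre m (int p)) (prime_factorization (nat n)))"

text \<open>Extended symbol with values in {1,-1,*}: None encodes the symbol *
  (used when n is even); Some j encodes the Jacobi symbol j.\<close>

definition jac_sym :: "int \<Rightarrow> int \<Rightarrow> int option" where
  "jac_sym m n = (if even n then None else Some (jacobi m n))"

definition jacobi_seq :: "real \<Rightarrow> nat \<Rightarrow> int option" where
  "jacobi_seq x k = jac_sym (cf_s x k) (cf_t x k)"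

end

theory Submission
  imports Defs "HOL-Analysis.Analysis"
begin

text \<open>Cohn's integrals \<open>\<integral>\<^sub>0\<^sup>1 x\<^sup>m (1 - x)\<^sup>n e\<^sup>x / n! dx\<close> form a positive sequence satisfying the
  recurrence of the remainders of \<open>e = [2; 1, 2, 1, 1, 4, 1, 1, 6, \<dots>]\<close>, which identifies the partial
  quotients of \<open>e\<close>. Modulo 8 these quotients, and hence the denominators \<open>t\<^sub>k\<close>, are periodic. The
  symbol of two consecutive denominators, taken with the odd one at the bottom, changes from \<open>k\<close> to
  \<open>k + 1\<close> by a sign determined by reciprocity and the residues of \<open>t\<^sub>k\<^sub>+\<^sub>1, t\<^sub>k\<^sub>+\<^sub>2\<close> mod 8;
  since \<open>s\<^sub>k\<^sub>+\<^sub>1 t\<^sub>k - s\<^sub>k t\<^sub>k\<^sub>+\<^sub>1 = (-1)\<^sup>k\<close>, the Jacobi symbol \<open>(s\<^sub>k/t\<^sub>k)\<close> is that symbol times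
  \<open>((-1)\<^sup>k/t\<^sub>k)\<close>. Everything is thus determined by \<open>k\<close> mod 24, and the first 24 values are computed
  explicitly.\<close>

section \<open>Legendre and Jacobi symbols\<close>

lemma Legendre_values: "Legendre a p \<in> {-1, 0, 1}"
  by (simp add: Legendre_def)

text \<open>Since \<open>p > 2\<close>, the residues of \<open>-1, 0, 1\<close> modulo \<open>p\<close> are distinct, so Euler's criterion
  determines the Legendre symbol.\<close>

lemma Legendre_eq_by_euler:
  assumes "prime p" "2 < p" "b \<in> {-1, 0, 1}" "[b = a ^ ((p - 1) div 2)] (mod int p)"
  shows "Legendre a (int p) = b"
proof -
  have "[Legendre a (int p) = b] (mod int p)"
    using euler_criterion[OF assms(1,2), of a] assms(4) by (meson cong_sym cong_trans)
  then have "[Legendre a (int p) + 1 = b + 1] (mod int p)"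
    by (rule cong_add) simp
  then show ?thesis
    using assms(2,3) Legendre_values[of a "int p"]
      cong_less_imp_eq_int[of "Legendre a (int p) + 1" "int p" "b + 1"] by auto
qed

lemma Legendre_mult:
  assumes "prime p" "2 < p"
  shows "Legendre (a * b) (int p) = Legendre a (int p) * Legendre b (int p)"
proof (rule Legendre_eq_by_euler[OF assms])
  show "Legendre a (int p) * Legendre b (int p) \<in> {-1, 0, 1}"
    using Legendre_values[of a "int p"] Legendre_values[of b "int p"] by auto
  show "[Legendre a (int p) * Legendre b (int p) = (a * b) ^ ((p - 1) div 2)] (mod int p)"
    unfolding power_mult_distrib by (intro cong_mult euler_criterion[OF assms])
qed

lemma Legendre_cong:
  assumes "prime p" "2 < p" "[a = b] (mod int p)"
  shows "Legendre a (int p) = Legendre b (int p)"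
proof (rule Legendre_eq_by_euler[OF assms(1,2) Legendre_values])
  show "[Legendre b (int p) = a ^ ((p - 1) div 2)] (mod int p)"
    using euler_criterion[OF assms(1,2), of b] cong_pow[OF assms(3)]
    by (meson cong_sym cong_trans)
qed

lemma Legendre_one:
  assumes "prime p" "2 < p"
  shows "Legendre 1 (int p) = 1"
  by (rule Legendre_eq_by_euler[OF assms]) auto

definition sign_mod4 :: "int \<Rightarrow> int" where
  "sign_mod4 n = (if n mod 4 = 1 then 1 else -1)"

definition reciprocity_sign :: "int \<Rightarrow> int \<Rightarrow> int" where
  "reciprocity_sign m n = (if m mod 4 = 3 \<and> n mod 4 = 3 then -1 else 1)"

lemma odd_mod4_cases: "odd (n :: int) \<Longrightarrow> n mod 4 = 1 \<or> n mod 4 = 3"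
  by presburger

lemma odd_mult_mod4_eq_1:
  fixes m n :: int
  assumes "odd m" "odd n"
  shows "m * n mod 4 = 1 \<longleftrightarrow> (m mod 4 = 1 \<longleftrightarrow> n mod 4 = 1)"
proof -
  have "m * n mod 4 = (m mod 4) * (n mod 4) mod 4"
    by (simp add: mod_mult_eq)
  then show ?thesis
    using odd_mod4_cases[OF assms(1)] odd_mod4_cases[OF assms(2)] by auto
qed

lemma sign_mod4_mult: "odd m \<Longrightarrow> odd n \<Longrightarrow> sign_mod4 (m * n) = sign_mod4 m * sign_mod4 n"
  by (simp add: sign_mod4_def odd_mult_mod4_eq_1)

lemma reciprocity_sign_commute: "reciprocity_sign m n = reciprocity_sign n m"
  by (auto simp: reciprocity_sign_def)

lemma reciprocity_sign_mult_right:
  "odd n \<Longrightarrow> odd n' \<Longrightarrow> reciprocity_sign m (n * n') = reciprocity_sign m n * reciprocity_sign m n'"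
  using odd_mult_mod4_eq_1[of n n'] odd_mod4_cases[of n] odd_mod4_cases[of n'] odd_mod4_cases[of "n * n'"]
  by (auto simp: reciprocity_sign_def)

lemma Legendre_minus_one:
  assumes "prime p" "2 < p"
  shows "Legendre (-1) (int p) = sign_mod4 (int p)"
proof (rule Legendre_eq_by_euler[OF assms])
  have "odd p"
    using assms prime_odd_nat by blast
  then have "even ((p - 1) div 2) \<longleftrightarrow> int p mod 4 = 1"
    by presburger
  then show "[sign_mod4 (int p) = (-1) ^ ((p - 1) div 2)] (mod int p)"
    by (simp add: sign_mod4_def)
qed (simp add: sign_mod4_def)

lemma Legendre_reciprocity:
  assumes "prime p" "2 < p" "prime q" "2 < q" "p \<noteq> q"
  shows "Legendre (int p) (int q) * Legendre (int q) (int p) = reciprocity_sign (int p) (int q)"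
proof -
  have "odd p" "odd q"
    using assms prime_odd_nat by blast+
  then have "even ((p - 1) div 2) \<longleftrightarrow> int p mod 4 \<noteq> 3" "even ((q - 1) div 2) \<longleftrightarrow> int q mod 4 \<noteq> 3"
    by presburger+
  then show ?thesis
    using Quadratic_Reciprocity[OF assms] by (simp add: reciprocity_sign_def)
qed

lemma jacobi_one_right [simp]: "jacobi a 1 = 1"
  by (simp add: jacobi_def)

lemma jacobi_prime_mult:
  assumes "prime p" "n > 0"
  shows "jacobi a (int p * n) = Legendre a (int p) * jacobi a n"
proof -
  have "nat (int p * n) = p * nat n"
    using assms(2) by (simp add: nat_mult_distrib)
  moreover have "p \<noteq> 0" "nat n \<noteq> 0"
    using assms prime_gt_0_nat by auto
  ultimately show ?thesis
    using assms(1) by (simp add: jacobi_def prime_factorization_mult prime_factorization_prime)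
qed

lemma odd_pos_int_induct [consumes 2, case_names one prime_mult]:
  fixes n :: int
  assumes "n > 0" "odd n"
    and one: "P 1"
    and prime_mult: "\<And>p m. prime p \<Longrightarrow> 2 < p \<Longrightarrow> m > 0 \<Longrightarrow> odd m \<Longrightarrow> P m \<Longrightarrow> P (int p * m)"
  shows "P n"
proof -
  have "N > 0 \<longrightarrow> odd N \<longrightarrow> P (int N)" for N
  proof (induction N rule: prime_divisors_induct)
    case (factor p m)
    show ?case
    proof (intro impI)
      assume "p * m > 0" "odd (p * m)"
      then have "odd p" "odd m" "m > 0"
        by auto
      moreover have "2 < p"
        using \<open>odd p\<close> prime_ge_2_nat[OF factor(1)] by (cases "p = 2") auto
      ultimately show "P (int (p * m))"
        using prime_mult[OF factor(1), of "int m"] factor.IH by simp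
    qed
  qed (auto simp: one)
  then show ?thesis
    using assms(1,2) by (metis pos_int_cases even_of_nat_iff)
qed

lemma jacobi_mult_left:
  assumes "n > 0" "odd n"
  shows "jacobi (a * b) n = jacobi a n * jacobi b n"
  using assms
  by (induction n rule: odd_pos_int_induct) (simp_all add: jacobi_prime_mult Legendre_mult)

lemma jacobi_cong:
  assumes "n > 0" "odd n" "[a = b] (mod n)"
  shows "jacobi a n = jacobi b n"
  using assms
proof (induction n rule: odd_pos_int_induct)
  case (prime_mult p m)
  then have "[a = b] (mod int p)" "[a = b] (mod m)"
    by (auto intro: cong_dvd_modulus)
  then show ?case
    using prime_mult by (simp add: jacobi_prime_mult Legendre_cong)
qed simp

lemma jacobi_one_left:
  assumes "n > 0" "odd n"
  shows "jacobi 1 n = 1"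
  using assms
  by (induction n rule: odd_pos_int_induct) (simp_all add: jacobi_prime_mult Legendre_one)

lemma jacobi_minus_one:
  assumes "n > 0" "odd n"
  shows "jacobi (-1) n = sign_mod4 n"
  using assms
proof (induction n rule: odd_pos_int_induct)
  case one
  then show ?case by (simp add: sign_mod4_def)
next
  case (prime_mult p m)
  then have "odd (int p)"
    using prime_odd_nat by auto
  with prime_mult show ?case
    by (simp add: jacobi_prime_mult Legendre_minus_one sign_mod4_mult)
qed

lemma jacobi_coprime_values:
  assumes "n > 0" "odd n" "coprime a n"
  shows "jacobi a n \<in> {-1, 1}"
  using assms
proof (induction n rule: odd_pos_int_induct)
  case (prime_mult p m)
  then have "coprime a (int p)" "coprime a m"
    by auto
  then have "\<not> [a = 0] (mod int p)"
    using prime_mult(1) by (metis cong_0_iff coprime_absorb_right not_prime_unit prime_nat_int_transfer)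
  then have "Legendre a (int p) \<in> {-1, 1}"
    by (auto simp: Legendre_def)
  with prime_mult \<open>coprime a m\<close> show ?case
    by (auto simp: jacobi_prime_mult)
qed simp

lemma Legendre_jacobi_reciprocity:
  assumes "prime p" "2 < p" "n > 0" "odd n" "coprime (int p) n"
  shows "jacobi (int p) n * Legendre n (int p) = reciprocity_sign (int p) n"
  using assms(3-)
proof (induction n rule: odd_pos_int_induct)
  case one
  then show ?case
    using assms(1,2) by (simp add: Legendre_one reciprocity_sign_def)
next
  case (prime_mult q m)
  then have "q \<noteq> p" "coprime (int p) m"
    using assms(1) by auto
  then have "jacobi (int p) (int q * m) * Legendre (int q * m) (int p)
      = (Legendre (int p) (int q) * Legendre (int q) (int p)) * (jacobi (int p) m * Legendre m (int p))"
    using prime_mult(1,3) assms(1,2) by (simp add: jacobi_prime_mult Legendre_mult)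
  also have "\<dots> = reciprocity_sign (int p) (int q) * reciprocity_sign (int p) m"
    using Legendre_reciprocity[OF assms(1,2) prime_mult(1,2)] \<open>q \<noteq> p\<close> prime_mult.IH \<open>coprime (int p) m\<close>
    by simp
  also have "\<dots> = reciprocity_sign (int p) (int q * m)"
    using prime_mult(1,2,4) prime_odd_nat by (simp add: reciprocity_sign_mult_right)
  finally show ?case .
qed

theorem jacobi_reciprocity:
  assumes "m > 0" "odd m" "n > 0" "odd n" "coprime m n"
  shows "jacobi m n * jacobi n m = reciprocity_sign m n"
  using assms(1,2,5)
proof (induction m rule: odd_pos_int_induct)
  case one
  then show ?case
    using assms(3,4) by (simp add: jacobi_one_left reciprocity_sign_def)
next
  case (prime_mult p k)
  then have "coprime (int p) n" "coprime k n" "odd (int p)"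
    using prime_odd_nat by auto
  have "jacobi (int p * k) n * jacobi n (int p * k)
      = (jacobi (int p) n * Legendre n (int p)) * (jacobi k n * jacobi n k)"
    using assms(3,4) prime_mult(1,3) by (simp add: jacobi_mult_left jacobi_prime_mult)
  also have "\<dots> = reciprocity_sign n (int p) * reciprocity_sign n k"
    using Legendre_jacobi_reciprocity[OF prime_mult(1,2) assms(3,4)] prime_mult.IH
      \<open>coprime (int p) n\<close> \<open>coprime k n\<close> by (simp add: reciprocity_sign_commute)
  also have "\<dots> = reciprocity_sign (int p * k) n"
    using \<open>odd (int p)\<close> prime_mult(4) by (simp add: reciprocity_sign_mult_right reciprocity_sign_commute)
  finally show ?case .
qed

text \<open>The second supplement follows from reciprocity between the coprime numbers \<open>n\<close> and
  \<open>n + 2\<close>, since \<open>n + 2 \<equiv> 2\<close> mod \<open>n\<close> and \<open>n \<equiv> -2\<close> mod \<open>n + 2\<close>.\<close>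

theorem jacobi_two:
  assumes "n > 0" "odd n"
  shows "jacobi 2 n = (if n mod 8 = 1 \<or> n mod 8 = 7 then 1 else -1)"
proof -
  have "jacobi 2 (2 * int i + 1) = (if (2 * int i + 1) mod 8 = 1 \<or> (2 * int i + 1) mod 8 = 7 then 1 else -1)"
    for i :: nat
  proof (induction i)
    case (Suc i)
    define m where "m = 2 * int i + 1"
    have m: "m > 0" "odd m" "m + 2 > 0" "odd (m + 2)"
      by (simp_all add: m_def)
    have "coprime m (m + 2)"
    proof -
      have "[2 = m + 2] (mod m)" "coprime 2 m"
        using m(2) by (simp_all add: Cong.cong_def)
      then show ?thesis
        using cong_imp_coprime coprime_commute by blast
    qed
    from jacobi_reciprocity[OF m this]
    have "jacobi m (m + 2) * jacobi (m + 2) m = 1"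
      using m(2) by (simp add: reciprocity_sign_def) presburger
    moreover have "jacobi (m + 2) m = jacobi 2 m"
      using m by (intro jacobi_cong) (simp_all add: Cong.cong_def)
    moreover have "jacobi m (m + 2) = jacobi (-1) (m + 2) * jacobi 2 (m + 2)"
    proof -
      have "[m = -1 * 2] (mod m + 2)"
        by (simp add: cong_iff_dvd_diff)
      then show ?thesis
        using m(3,4) by (metis jacobi_cong jacobi_mult_left)
    qed
    moreover have "jacobi 2 m \<in> {-1, 1}" "jacobi 2 (m + 2) \<in> {-1, 1}"
      using m jacobi_coprime_values[of m 2] jacobi_coprime_values[of "m + 2" 2] by simp_all
    ultimately have "jacobi 2 (m + 2) = sign_mod4 (m + 2) * jacobi 2 m"
      using jacobi_minus_one[OF m(3,4)] by (auto simp: sign_mod4_def split: if_splits)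
    moreover have "m mod 8 = 1 \<or> m mod 8 = 3 \<or> m mod 8 = 5 \<or> m mod 8 = 7"
      "(m + 2) mod 8 = (m mod 8 + 2) mod 8" "(m + 2) mod 4 = (m mod 8 + 2) mod 4"
      using m(2) by presburger+
    moreover have "2 * int (Suc i) + 1 = m + 2"
      by (simp add: m_def)
    ultimately show ?case
      using Suc.IH by (auto simp: m_def[symmetric] sign_mod4_def)
  qed simp
  moreover obtain i :: nat where "n = 2 * int i + 1"
  proof -
    obtain k where "n = 2 * k + 1"
      using assms(2) by (rule oddE)
    with assms(1) have "n = 2 * int (nat k) + 1"
      by simp
    then show ?thesis
      by (rule that)
  qed
  ultimately show ?thesis
    by simp
qed

text \<open>For odd \<open>a\<close>, reciprocity turns \<open>(a/z)\<close> into \<open>(z/a)\<close>, which depends on \<open>z\<close> mod \<open>a\<close>, times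
  a sign depending on \<open>z\<close> mod 4; a factor 2 of \<open>a\<close> is peeled off with the second supplement,
  which depends on \<open>z\<close> mod 8.\<close>

lemma jacobi_right_cong:
  assumes "a > 0" "x > 0" "odd x" "z > 0" "odd z" "coprime a x" "[z = x] (mod 4 * a)"
  shows "jacobi a z = jacobi a x"
  using assms
proof (induction "nat a" arbitrary: a rule: less_induct)
  case less
  have mod4: "[z = x] (mod 4)" and mod_a: "[z = x] (mod a)"
    using less.prems(7) by (auto intro: cong_dvd_modulus)
  show ?case
  proof (cases "odd a")
    case True
    have "coprime a z"
      using cong_imp_coprime[OF cong_sym[OF mod_a]] less.prems(6) by (simp add: coprime_commute)
    then have "jacobi a z * jacobi z a = reciprocity_sign a z"
      using less.prems True by (intro jacobi_reciprocity) auto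
    moreover have "jacobi a x * jacobi x a = reciprocity_sign a x"
      using less.prems True by (intro jacobi_reciprocity) auto
    moreover have "jacobi z a = jacobi x a"
      using less.prems(1) True mod_a by (rule jacobi_cong)
    moreover have "reciprocity_sign a z = reciprocity_sign a x"
      using mod4 by (simp add: reciprocity_sign_def Cong.cong_def)
    moreover have "jacobi x a \<in> {-1, 1}"
      using less.prems True by (intro jacobi_coprime_values) (auto simp: coprime_commute)
    ultimately show ?thesis
      by auto
  next
    case False
    then obtain b where a: "a = 2 * b"
      by blast
    have "jacobi b z = jacobi b x"
    proof (rule less.hyps)
      show "[z = x] (mod 4 * b)"
        using less.prems(7) a by (auto intro: cong_dvd_modulus)
    qed (use less.prems a in auto)
    moreover have "jacobi 2 z = jacobi 2 x"
    proof -
      have "[z = x] (mod 8)"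
        using less.prems(7) a by (auto intro: cong_dvd_modulus)
      then show ?thesis
        using jacobi_two[of z] jacobi_two[of x] less.prems(2-5) by (simp add: Cong.cong_def)
    qed
    ultimately show ?thesis
      using a less.prems(2-5) by (simp add: jacobi_mult_left)
  qed
qed

lemma jacobi_right_cong_four_dvd:
  assumes "a > 0" "4 dvd a" "x > 0" "odd x" "z > 0" "odd z" "coprime a x" "[z = x] (mod a)"
  shows "jacobi a z = jacobi a x"
proof -
  obtain b where a: "a = 4 * b"
    using assms(2) by blast
  have four: "jacobi 4 n = 1" if "n > 0" "odd n" for n
  proof -
    have "jacobi 2 n \<in> {-1, 1}"
      using that by (intro jacobi_coprime_values) auto
    then show ?thesis
      using jacobi_mult_left[OF that, of 2 2] by auto
  qed
  have "jacobi b z = jacobi b x"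
    using assms a by (intro jacobi_right_cong) auto
  then show ?thesis
    using a assms(3-6) four by (simp add: jacobi_mult_left)
qed

definition jacobi_pair :: "int \<Rightarrow> int \<Rightarrow> int" where
  "jacobi_pair u v = (if odd v then jacobi u v else jacobi v u)"

text \<open>For even \<open>y\<close>, the hypothesis \<open>4 dvd y\<close> is what makes \<open>(y/z) = (y/x)\<close> follow from
  \<open>z \<equiv> x\<close> mod \<open>y\<close>.\<close>

lemma jacobi_pair_step:
  assumes "x > 0" "y > 0" "z = c * y + x" "c \<ge> 0" "coprime x y" "even y \<Longrightarrow> 4 dvd y"
  shows "jacobi_pair y z = (if odd y \<and> odd z then reciprocity_sign y z else 1) * jacobi_pair x y"
proof -
  have "z > 0"
    using assms(1-4) by (simp add: add_nonneg_pos)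
  have cong: "[z = x] (mod y)"
    using assms(3) by (simp add: cong_iff_dvd_diff)
  then have "coprime z y"
    using assms(5) cong_imp_coprime cong_sym by blast
  show ?thesis
  proof (cases "odd y")
    case True
    have "jacobi z y = jacobi x y"
      using assms(2) True cong by (rule jacobi_cong)
    moreover have "jacobi y z * jacobi z y = reciprocity_sign y z" if "odd z"
      using assms(2) \<open>z > 0\<close> True that \<open>coprime z y\<close> by (intro jacobi_reciprocity) (auto simp: coprime_commute)
    moreover have "jacobi z y \<in> {-1, 1}"
      using assms(2) True \<open>coprime z y\<close> by (rule jacobi_coprime_values)
    ultimately show ?thesis
      using True by (auto simp: jacobi_pair_def)
  next
    case False
    then have "odd z"
      using \<open>coprime z y\<close> by auto
    then have "odd x"
      using False assms(3) by auto
    have "jacobi y z = jacobi y x"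
      using assms False \<open>z > 0\<close> \<open>odd z\<close> \<open>odd x\<close> cong
      by (intro jacobi_right_cong_four_dvd) (auto simp: coprime_commute)
    then show ?thesis
      using False \<open>odd z\<close> by (simp add: jacobi_pair_def)
  qed
qed

lemma jacobi_of_det:
  assumes "t > 0" "odd t" "t' > 0" "coprime t' t" "s * t' - s' * t = d"
  shows "jacobi s t = jacobi d t * jacobi t' t"
proof -
  have "[s * t' = d] (mod t)"
    using assms(5) by (auto simp: cong_iff_dvd_diff)
  then have "jacobi s t * jacobi t' t = jacobi d t"
    using assms(1,2) by (metis jacobi_cong jacobi_mult_left)
  moreover have "jacobi t' t \<in> {-1, 1}"
    using assms(1,2,4) by (rule jacobi_coprime_values)
  ultimately show ?thesis
    by auto
qed

section \<open>Continued fractions\<close>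

lemma cf_det: "cf_s x (Suc k) * cf_t x k - cf_s x k * cf_t x (Suc k) = (-1) ^ k"
  by (induction k) (simp_all add: algebra_simps)

lemma coprime_cf_t_Suc: "coprime (cf_t x k) (cf_t x (Suc k))"
proof (rule coprimeI)
  fix c
  assume "c dvd cf_t x k" "c dvd cf_t x (Suc k)"
  then have "c dvd cf_s x (Suc k) * cf_t x k - cf_s x k * cf_t x (Suc k)"
    by simp
  then have "c dvd (-1) ^ k"
    by (simp only: cf_det)
  then show "is_unit c"
    by (rule dvd_unit_imp_unit) simp
qed

lemma cf_t_pos:
  assumes "\<And>k. cf_a x (Suc k) \<ge> 1"
  shows "cf_t x k > 0"
proof -
  have "cf_t x k > 0 \<and> cf_t x (Suc k) > 0"
  proof (induction k)
    case (Suc k)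
    then show ?case
      using assms[of "Suc k"] by (simp add: add_pos_pos)
  qed (use assms[of 0] in simp)
  then show ?thesis ..
qed

text \<open>The complete quotients of \<open>x\<close> are \<open>r k / r (k + 1)\<close>.\<close>

lemma cf_a_eq_of_remainders:
  fixes r :: "nat \<Rightarrow> real" and a :: "nat \<Rightarrow> int"
  assumes pos: "\<And>k. r k > 0" and r0: "r 0 = 1" and x: "x = of_int (a 0) + r 1"
    and rec: "\<And>k. r k = of_int (a (Suc k)) * r (Suc k) + r (Suc (Suc k))"
    and a: "\<And>k. a (Suc k) \<ge> 1"
  shows "cf_a x k = a k"
proof -
  have decreasing: "r (Suc k) < r k" for k
  proof -
    have "r (Suc k) \<le> of_int (a (Suc k)) * r (Suc k)"
      using a[of k] pos[of "Suc k"] by simp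
    then show ?thesis
      using rec[of k] pos[of "Suc (Suc k)"] by linarith
  qed
  have floor_quotient: "\<lfloor>r k / r (Suc k)\<rfloor> = a (Suc k)" for k
  proof (rule floor_unique)
    have "r k / r (Suc k) = of_int (a (Suc k)) + r (Suc (Suc k)) / r (Suc k)"
      using rec[of k] pos[of "Suc k"] by (simp add: field_simps)
    moreover have "0 < r (Suc (Suc k)) / r (Suc k)" "r (Suc (Suc k)) / r (Suc k) < 1"
      using decreasing[of "Suc k"] pos[of "Suc k"] pos[of "Suc (Suc k)"] by simp_all
    ultimately show "of_int (a (Suc k)) \<le> r k / r (Suc k)" "r k / r (Suc k) < of_int (a (Suc k)) + 1"
      by linarith+
  qed
  have floor_x: "\<lfloor>x\<rfloor> = a 0"
    unfolding x using pos[of 1] decreasing[of 0] r0 by (intro floor_unique) auto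
  have rem: "cf_rem x (Suc k) = r k / r (Suc k)" for k
  proof (induction k)
    case 0
    then show ?case
      using r0 by (simp add: floor_x) (simp add: x)
  next
    case (Suc k)
    have "r k / r (Suc k) - of_int (a (Suc k)) = r (Suc (Suc k)) / r (Suc k)"
      using rec[of k] pos[of "Suc k"] by (simp add: field_simps)
    then show ?case
      using Suc.IH by (simp add: floor_quotient)
  qed
  show ?thesis
    by (cases k) (simp_all only: cf_a_def cf_rem.simps(1) floor_x rem floor_quotient)
qed

section \<open>The continued fraction of \<open>e\<close>\<close>

definition e_quot :: "nat \<Rightarrow> int" where
  "e_quot k = (if k = 0 then 2 else if k mod 3 = 2 then 2 * int (k div 3 + 1) else 1)"

lemma e_quot_ge_1: "e_quot k \<ge> 1"
  by (simp add: e_quot_def)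

lemma e_quot_3n_2: "e_quot (3 * n + 2) = 2 * int (n + 1)"
proof -
  have "(3 * n + 2) div 3 = n" "(3 * n + 2) mod 3 = 2"
    by presburger+
  then show ?thesis
    by (simp add: e_quot_def)
qed

lemma e_quot_3n_3: "e_quot (3 * n + 3) = 1"
  unfolding e_quot_def by presburger

lemma e_quot_3n_4: "e_quot (3 * n + 4) = 1"
  unfolding e_quot_def by presburger

definition cohn_integrand :: "nat \<Rightarrow> real \<Rightarrow> real" where
  "cohn_integrand k x = x ^ (k div 3 + k mod 3) * (1 - x) ^ (k div 3 + 1) * exp x
     / fact (if k mod 3 = 0 then k div 3 else k div 3 + 1)"

definition cohn_integral :: "nat \<Rightarrow> real" where
  "cohn_integral k = integral {0..1} (cohn_integrand k)"

lemma cohn_integrand_3n: "cohn_integrand (3 * n) x = x ^ n * (1 - x) ^ Suc n * exp x / fact n"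
  by (simp add: cohn_integrand_def)

lemma cohn_integrand_3n_1:
  "cohn_integrand (3 * n + 1) x = x ^ Suc n * (1 - x) ^ Suc n * exp x / fact (Suc n)"
proof -
  have "(3 * n + 1) div 3 = n" "(3 * n + 1) mod 3 = 1"
    by presburger+
  then show ?thesis
    by (simp add: cohn_integrand_def)
qed

lemma cohn_integrand_3n_2:
  "cohn_integrand (3 * n + 2) x = x ^ Suc (Suc n) * (1 - x) ^ Suc n * exp x / fact (Suc n)"
proof -
  have "(3 * n + 2) div 3 = n" "(3 * n + 2) mod 3 = 2"
    by presburger+
  then show ?thesis
    by (simp add: cohn_integrand_def numeral_2_eq_2)
qed

lemma continuous_on_cohn_integrand: "continuous_on {0..1} (cohn_integrand k)"
  unfolding cohn_integrand_def by (intro continuous_intros) auto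

lemma has_integral_cohn_integral: "(cohn_integrand k has_integral cohn_integral k) {0..1}"
  unfolding cohn_integral_def
  by (intro integrable_integral integrable_continuous_real continuous_on_cohn_integrand)

lemma cohn_integral_pos: "cohn_integral k > 0"
proof -
  have nonneg: "x \<in> {0..1} \<Longrightarrow> cohn_integrand k x \<ge> 0" for x
    by (auto simp: cohn_integrand_def)
  have "cohn_integral k \<ge> 0"
    unfolding cohn_integral_def
    using has_integral_cohn_integral nonneg by (intro integral_nonneg) (auto simp: has_integral_integrable)
  moreover have "cohn_integrand k (1 / 2) > 0"
    by (simp add: cohn_integrand_def)
  then have "cohn_integral k \<noteq> 0"
    unfolding cohn_integral_def
    using integral_eq_0_iff[OF continuous_on_cohn_integrand[of k]] nonneg by force
  ultimately show ?thesis
    by linarith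
qed

lemma has_integral_01_of_DERIV:
  assumes "\<And>x. (f has_real_derivative f' x) (at x)"
  shows "(f' has_integral (f 1 - f 0)) {0..1::real}"
  by (intro fundamental_theorem_of_calculus)
    (auto simp: has_real_derivative_iff_has_vector_derivative[symmetric]
      intro: has_field_derivative_at_within assms)

lemma cohn_integral_0: "cohn_integral 0 = exp 1 - 2"
proof -
  have "((\<lambda>x. (2 - x) * exp x) has_real_derivative cohn_integrand 0 x) (at x)" for x
    using cohn_integrand_3n[of 0 x]
    by (auto intro!: derivative_eq_intros simp: algebra_simps)
  from has_integral_unique[OF has_integral_cohn_integral has_integral_01_of_DERIV[OF this]]
  show ?thesis
    by simp
qed

lemma cohn_integral_1: "cohn_integral 1 = 3 - exp 1"
proof -
  have "((\<lambda>x. (3 * x - x\<^sup>2 - 3) * exp x) has_real_derivative cohn_integrand 1 x) (at x)" for x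
    using cohn_integrand_3n_1[of 0 x]
    by (auto intro!: derivative_eq_intros simp: algebra_simps power2_eq_square)
  from has_integral_unique[OF has_integral_cohn_integral has_integral_01_of_DERIV[OF this]]
  show ?thesis
    by simp
qed

lemma DERIV_power_power_exp:
  "((\<lambda>x. x ^ Suc m * (1 - x) ^ Suc j * exp x) has_real_derivative
     (real (Suc m) * x ^ m * (1 - x) ^ Suc j - real (Suc j) * x ^ Suc m * (1 - x) ^ j
       + x ^ Suc m * (1 - x) ^ Suc j) * exp x) (at x)"
proof -
  have "((\<lambda>x. x ^ Suc m) has_real_derivative (1 + real m) * (1 * x ^ m)) (at x)"
    by (rule DERIV_power_Suc[OF DERIV_ident])
  moreover have "((\<lambda>x. (1 - x) ^ Suc j) has_real_derivative (1 + real j) * ((-1) * (1 - x) ^ j)) (at x)"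
    by (rule DERIV_power_Suc) (auto intro!: derivative_eq_intros)
  ultimately show ?thesis
    by (rule DERIV_cong[OF DERIV_mult[OF DERIV_mult DERIV_exp]]) (simp add: algebra_simps)
qed

lemma cohn_combination_3n:
  "cohn_integrand (3 * n + 2) x + of_int (e_quot (3 * n + 2)) * cohn_integrand (3 * n + 1) x
     - cohn_integrand (3 * n) x =
   - 1 / fact (Suc n) *
    ((real (Suc n) * x ^ n * (1 - x) ^ Suc (Suc n) - real (Suc (Suc n)) * x ^ Suc n * (1 - x) ^ Suc n
      + x ^ Suc n * (1 - x) ^ Suc (Suc n)) * exp x)"
proof -
  have u: "cohn_integrand (3 * n) x = real (Suc n) * x ^ n * (1 - x) ^ Suc n * exp x / fact (Suc n)"
    unfolding cohn_integrand_3n by (simp add: field_simps del: of_nat_Suc)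
  have "x ^ Suc (Suc n) * (1 - x) ^ Suc n * exp x
      + of_int (2 * int (n + 1)) * (x ^ Suc n * (1 - x) ^ Suc n * exp x)
      - real (Suc n) * x ^ n * (1 - x) ^ Suc n * exp x =
    - ((real (Suc n) * x ^ n * (1 - x) ^ Suc (Suc n) - real (Suc (Suc n)) * x ^ Suc n * (1 - x) ^ Suc n
      + x ^ Suc n * (1 - x) ^ Suc (Suc n)) * exp x)"
    by (simp add: power_Suc algebra_simps)
  from arg_cong[OF this, of "\<lambda>t. t / fact (Suc n)"] show ?thesis
    unfolding u cohn_integrand_3n_1 cohn_integrand_3n_2 e_quot_3n_2
    by (simp add: diff_divide_distrib add_divide_distrib)
qed

lemma cohn_combination_3n_1:
  "cohn_integrand (3 * n + 3) x + of_int (e_quot (3 * n + 3)) * cohn_integrand (3 * n + 2) x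
     - cohn_integrand (3 * n + 1) x = 0"
proof -
  have eq: "3 * n + 3 = 3 * Suc n"
    by simp
  have "x ^ Suc n * (1 - x) ^ Suc (Suc n) * exp x + x ^ Suc (Suc n) * (1 - x) ^ Suc n * exp x
      - x ^ Suc n * (1 - x) ^ Suc n * exp x = 0"
    by (simp add: power_Suc algebra_simps)
  from arg_cong[OF this, of "\<lambda>t. t / fact (Suc n)"] show ?thesis
    unfolding e_quot_3n_3 unfolding eq cohn_integrand_3n cohn_integrand_3n_1 cohn_integrand_3n_2
    by (simp add: diff_divide_distrib add_divide_distrib)
qed

lemma cohn_combination_3n_2:
  "cohn_integrand (3 * n + 4) x + of_int (e_quot (3 * n + 4)) * cohn_integrand (3 * n + 3) x
     - cohn_integrand (3 * n + 2) x =
   1 / fact (Suc (Suc n)) *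
    ((real (Suc (Suc n)) * x ^ Suc n * (1 - x) ^ Suc (Suc n)
      - real (Suc (Suc n)) * x ^ Suc (Suc n) * (1 - x) ^ Suc n
      + x ^ Suc (Suc n) * (1 - x) ^ Suc (Suc n)) * exp x)"
proof -
  have eq: "3 * n + 4 = 3 * Suc n + 1" "3 * n + 3 = 3 * Suc n"
    by simp_all
  have u3: "cohn_integrand (3 * Suc n) x
      = real (Suc (Suc n)) * x ^ Suc n * (1 - x) ^ Suc (Suc n) * exp x / fact (Suc (Suc n))"
    unfolding cohn_integrand_3n by (simp add: field_simps del: of_nat_Suc)
  have u2: "cohn_integrand (3 * n + 2) x
      = real (Suc (Suc n)) * x ^ Suc (Suc n) * (1 - x) ^ Suc n * exp x / fact (Suc (Suc n))"
    unfolding cohn_integrand_3n_2 by (simp add: field_simps del: of_nat_Suc)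
  have "x ^ Suc (Suc n) * (1 - x) ^ Suc (Suc n) * exp x
      + real (Suc (Suc n)) * x ^ Suc n * (1 - x) ^ Suc (Suc n) * exp x
      - real (Suc (Suc n)) * x ^ Suc (Suc n) * (1 - x) ^ Suc n * exp x =
    (real (Suc (Suc n)) * x ^ Suc n * (1 - x) ^ Suc (Suc n)
      - real (Suc (Suc n)) * x ^ Suc (Suc n) * (1 - x) ^ Suc n
      + x ^ Suc (Suc n) * (1 - x) ^ Suc (Suc n)) * exp x"
    by (simp add: algebra_simps)
  from arg_cong[OF this, of "\<lambda>t. t / fact (Suc (Suc n))"] show ?thesis
    unfolding eq u3 cohn_integrand_3n_1 e_quot_3n_4[of n, unfolded eq] u2
    by (simp add: diff_divide_distrib add_divide_distrib)
qed

lemma has_integral_0_of_primitive: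
  assumes "\<And>x. (G has_real_derivative g x) (at x)" "G 0 = 0" "G 1 = 0"
  shows "(g has_integral 0) {0..1::real}"
  using has_integral_01_of_DERIV[OF assms(1)] assms(2,3) by simp

text \<open>Up to a constant factor, the integrand is the derivative of \<open>x\<^sup>m (1 - x)\<^sup>j e\<^sup>x\<close>, which
  vanishes at both ends of \<open>[0, 1]\<close>.\<close>

lemma has_integral_cohn_combination:
  "((\<lambda>x. cohn_integrand (k + 2) x + of_int (e_quot (k + 2)) * cohn_integrand (k + 1) x
     - cohn_integrand k x) has_integral 0) {0..1}"
proof -
  define n where "n = k div 3"
  have "k mod 3 = 0 \<or> k mod 3 = 1 \<or> k mod 3 = 2"
    by presburger
  then consider "k = 3 * n" | "k = 3 * n + 1" | "k = 3 * n + 2"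
    unfolding n_def by (metis div_mult_mod_eq add.right_neutral mult.commute)
  then show ?thesis
  proof cases
    case 1
    show ?thesis
      by (rule has_integral_0_of_primitive[where
          G = "\<lambda>x. - 1 / fact (Suc n) * (x ^ Suc n * (1 - x) ^ Suc (Suc n) * exp x)"])
        (simp_all only: 1 cohn_combination_3n DERIV_cmult DERIV_power_power_exp, simp_all)
  next
    case 2
    have "3 * n + 1 + 2 = 3 * n + 3" "3 * n + 1 + 1 = 3 * n + 2"
      by simp_all
    then show ?thesis
      by (simp only: 2 cohn_combination_3n_1 has_integral_0)
  next
    case 3
    have "3 * n + 2 + 2 = 3 * n + 4" "3 * n + 2 + 1 = 3 * n + 3"
      by simp_all
    then show ?thesis
      by (intro has_integral_0_of_primitive[where
          G = "\<lambda>x. 1 / fact (Suc (Suc n)) * (x ^ Suc (Suc n) * (1 - x) ^ Suc (Suc n) * exp x)"])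
        (simp_all only: 3 cohn_combination_3n_2 DERIV_cmult DERIV_power_power_exp, simp_all)
  qed
qed

lemma cohn_integral_rec:
  "cohn_integral k = of_int (e_quot (k + 2)) * cohn_integral (k + 1) + cohn_integral (k + 2)"
proof -
  have "((\<lambda>x. cohn_integrand (k + 2) x + of_int (e_quot (k + 2)) * cohn_integrand (k + 1) x
      - cohn_integrand k x) has_integral
      cohn_integral (k + 2) + of_int (e_quot (k + 2)) * cohn_integral (k + 1) - cohn_integral k) {0..1}"
    by (intro has_integral_diff has_integral_add has_integral_mult_right has_integral_cohn_integral)
  from has_integral_unique[OF this has_integral_cohn_combination] show ?thesis
    by simp
qed

lemma cf_a_exp_1: "cf_a (exp 1) k = e_quot k"
proof (rule cf_a_eq_of_remainders)
  let ?r = "\<lambda>k. case k of 0 \<Rightarrow> 1 | Suc j \<Rightarrow> cohn_integral j"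
  show "?r k > 0" for k
    by (cases k) (simp_all add: cohn_integral_pos)
  show "?r k = of_int (e_quot (Suc k)) * ?r (Suc k) + ?r (Suc (Suc k))" for k
  proof (cases k)
    case 0
    then show ?thesis
      using cohn_integral_1 by (simp add: cohn_integral_0 e_quot_def)
  next
    case (Suc j)
    then show ?thesis
      using cohn_integral_rec[of j] by simp
  qed
qed (simp_all add: cohn_integral_0 e_quot_def)

lemma cf_t_exp_1_pos: "cf_t (exp 1) k > 0"
  by (rule cf_t_pos) (simp add: cf_a_exp_1 e_quot_ge_1)

lemma cf_t_exp_1_Suc_Suc:
  "cf_t (exp 1) (Suc (Suc k)) = e_quot (k + 2) * cf_t (exp 1) (Suc k) + cf_t (exp 1) k"
  by (simp add: cf_a_exp_1)

section \<open>The Jacobi sequence of \<open>e\<close> modulo 24\<close>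

lemma e_quot_add_24_mod_8:
  assumes "k \<ge> 1"
  shows "e_quot (k + 24) mod 8 = e_quot k mod 8"
proof -
  have "(k + 24) mod 3 = k mod 3" "(k + 24) div 3 = k div 3 + 8"
    by presburger+
  moreover have "(18 + y) mod 8 = (2 + y) mod 8" for y :: int
    by presburger
  ultimately show ?thesis
    using assms by (simp add: e_quot_def)
qed

lemma e_quot_mod_8: "k \<ge> 1 \<Longrightarrow> e_quot k mod 8 = e_quot (k mod 24 + 24) mod 8"
proof (induction k rule: less_induct)
  case (less k)
  show ?case
  proof (cases "k < 24")
    case True
    then show ?thesis
      using less.prems by (simp add: e_quot_add_24_mod_8)
  next
    case False
    then obtain j where k: "k = j + 24"
      by (metis add.commute le_Suc_ex not_less)
    show ?thesis
    proof (cases "j = 0")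
      case True
      then show ?thesis by (simp add: k)
    next
      case False
      then show ?thesis
        using less.IH[of j] by (simp add: k e_quot_add_24_mod_8)
    qed
  qed
qed

text \<open>Residues of \<open>t\<^sub>k\<close> modulo 8, the symbols \<open>jacobi_pair t\<^sub>k t\<^sub>k\<^sub>+\<^sub>1\<close> and the Jacobi sequence of \<open>e\<close>
  for \<open>k < 24\<close>; the lemmas below check that these values reproduce themselves with period 24.\<close>

definition e_denom_mod8_table :: "int list" where
  "e_denom_mod8_table = [1, 1, 3, 4, 7, 0, 7, 7, 1, 0, 1, 0, 1, 1, 3, 4, 7, 0, 7, 7, 1, 0, 1, 0]"

definition e_jacobi_pair_table :: "int list" where
  "e_jacobi_pair_table = [1, 1, 1, 1, 1, 1, -1, -1, -1, -1, -1, -1, -1, -1, -1, -1, -1, -1, 1, 1, 1, 1, 1, 1]"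

definition e_jacobi_seq_table :: "int option list" where
  "e_jacobi_seq_table =
    [Some 1, Some 1, Some (-1), None, Some (-1), None, Some (-1), Some (-1), Some (-1), None, Some (-1), None,
     Some (-1), Some (-1), Some 1, None, Some 1, None, Some 1, Some 1, Some 1, None, Some 1, None]"

lemma e_denom_mod8_table_rec:
  "\<forall>r\<in>set [0..<24]. e_denom_mod8_table ! ((r + 2) mod 24) =
     (e_quot ((r + 2) mod 24 + 24) * e_denom_mod8_table ! ((r + 1) mod 24) + e_denom_mod8_table ! r) mod 8"
  unfolding e_denom_mod8_table_def e_quot_def by code_simp

lemma e_denom_mod8_table_even: "\<forall>r\<in>set [0..<24]. even (e_denom_mod8_table ! r) \<longrightarrow> 4 dvd e_denom_mod8_table ! r"
  unfolding e_denom_mod8_table_def by code_simp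

lemma e_jacobi_pair_table_rec:
  "\<forall>r\<in>set [0..<24]. e_jacobi_pair_table ! ((r + 1) mod 24) =
     (let y = e_denom_mod8_table ! ((r + 1) mod 24); z = e_denom_mod8_table ! ((r + 2) mod 24)
      in if odd y \<and> odd z then reciprocity_sign y z else 1) * e_jacobi_pair_table ! r"
  unfolding e_denom_mod8_table_def e_jacobi_pair_table_def reciprocity_sign_def by code_simp

lemma e_jacobi_seq_table_eq:
  "\<forall>r\<in>set [0..<24]. e_jacobi_seq_table ! ((r + 1) mod 24) =
     (let t = e_denom_mod8_table ! ((r + 1) mod 24)
      in if even t then None else Some ((if even r then 1 else sign_mod4 t) * e_jacobi_pair_table ! r))"
  unfolding e_denom_mod8_table_def e_jacobi_pair_table_def e_jacobi_seq_table_def sign_mod4_def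
  by code_simp

lemma e_jacobi_seq_table_aperiodic:
  "\<forall>L\<in>set [1..<24]. \<exists>k\<in>set [0..<24]. e_jacobi_seq_table ! k \<noteq> e_jacobi_seq_table ! ((k + L) mod 24)"
  unfolding e_jacobi_seq_table_def by code_simp

lemma even_mod_8_iff: "even (a mod 8) \<longleftrightarrow> even (a :: int)"
  by (simp add: even_iff_mod_2_eq_zero mod_mod_cancel)

lemma sign_mod4_mod_8: "sign_mod4 (a mod 8) = sign_mod4 a"
  by (simp add: sign_mod4_def mod_mod_cancel)

lemma reciprocity_sign_mod_8: "reciprocity_sign (a mod 8) (b mod 8) = reciprocity_sign a b"
  by (simp add: reciprocity_sign_def mod_mod_cancel)

lemma mod_24_Suc: "Suc k mod 24 = (k mod 24 + 1) mod 24" "Suc (Suc k) mod 24 = (k mod 24 + 2) mod 24"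
  by (simp_all add: mod_Suc_eq mod_Suc_Suc_eq)

lemma mod_eq_imp_cong: "a mod m = b \<Longrightarrow> [a = b] (mod m)"
  by (metis Cong.cong_def mod_mod_trivial)

lemma cf_t_exp_1_mod_8: "cf_t (exp 1) k mod 8 = e_denom_mod8_table ! (k mod 24)"
proof -
  have "cf_t (exp 1) k mod 8 = e_denom_mod8_table ! (k mod 24)
      \<and> cf_t (exp 1) (Suc k) mod 8 = e_denom_mod8_table ! (Suc k mod 24)"
  proof (induction k)
    case 0
    then show ?case
      by (simp add: cf_a_exp_1 e_quot_def e_denom_mod8_table_def)
  next
    case (Suc k)
    define r where "r = k mod 24"
    have "[e_quot (k + 2) = e_quot ((r + 2) mod 24 + 24)] (mod 8)"
      using e_quot_mod_8[of "k + 2"] mod_24_Suc(2)[of k] by (simp add: Cong.cong_def r_def)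
    moreover have "[cf_t (exp 1) (Suc k) = e_denom_mod8_table ! ((r + 1) mod 24)] (mod 8)"
      "[cf_t (exp 1) k = e_denom_mod8_table ! r] (mod 8)"
      using Suc.IH mod_24_Suc(1)[of k] by (simp_all add: mod_eq_imp_cong r_def)
    ultimately have "[cf_t (exp 1) (Suc (Suc k)) = e_quot ((r + 2) mod 24 + 24) * e_denom_mod8_table ! ((r + 1) mod 24)
        + e_denom_mod8_table ! r] (mod 8)"
      unfolding cf_t_exp_1_Suc_Suc by (intro cong_add cong_mult)
    then show ?case
      using e_denom_mod8_table_rec Suc.IH mod_24_Suc[of k] by (simp add: Cong.cong_def r_def)
  qed
  then show ?thesis ..
qed

lemma e_jacobi_pair_eq_table:
  "jacobi_pair (cf_t (exp 1) k) (cf_t (exp 1) (Suc k)) = e_jacobi_pair_table ! (k mod 24)"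
proof (induction k)
  case 0
  then show ?case
    by (simp add: jacobi_pair_def cf_a_exp_1 e_quot_def e_jacobi_pair_table_def)
next
  case (Suc k)
  define r where "r = k mod 24"
  let ?x = "cf_t (exp 1) k" and ?y = "cf_t (exp 1) (Suc k)" and ?z = "cf_t (exp 1) (Suc (Suc k))"
  let ?ty = "e_denom_mod8_table ! ((r + 1) mod 24)" and ?tz = "e_denom_mod8_table ! ((r + 2) mod 24)"
  have y: "?y mod 8 = ?ty"
    by (simp only: cf_t_exp_1_mod_8 mod_24_Suc(1) r_def)
  have z: "?z mod 8 = ?tz"
    by (simp only: cf_t_exp_1_mod_8 mod_24_Suc(2) r_def)
  have "4 dvd ?y" if "even ?y"
  proof -
    have "4 dvd ?ty"
      using that y e_denom_mod8_table_even even_mod_8_iff[of ?y] by simp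
    then show ?thesis
      using y by (metis dvd_mod_iff dvd_triv_right num_double numeral_mult)
  qed
  then have "jacobi_pair ?y ?z = (if odd ?y \<and> odd ?z then reciprocity_sign ?y ?z else 1) * jacobi_pair ?x ?y"
    by (intro jacobi_pair_step[OF cf_t_exp_1_pos cf_t_exp_1_pos cf_t_exp_1_Suc_Suc])
      (use e_quot_ge_1[of "Suc (Suc k)"] coprime_cf_t_Suc in auto)
  also have "\<dots> = (if odd ?ty \<and> odd ?tz then reciprocity_sign ?ty ?tz else 1) * e_jacobi_pair_table ! r"
  proof -
    have "odd ?y \<longleftrightarrow> odd ?ty" "odd ?z \<longleftrightarrow> odd ?tz"
      using even_mod_8_iff[of ?y] even_mod_8_iff[of ?z] by (simp_all only: y z)
    moreover have "reciprocity_sign ?y ?z = reciprocity_sign ?ty ?tz"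
      using reciprocity_sign_mod_8[of ?y ?z] by (simp only: y z)
    ultimately show ?thesis
      by (simp only: Suc.IH r_def)
  qed
  also have "\<dots> = e_jacobi_pair_table ! ((r + 1) mod 24)"
    using e_jacobi_pair_table_rec by (simp add: r_def Let_def)
  finally show ?case
    using mod_24_Suc(1)[of k] by (simp add: r_def)
qed

lemma jacobi_seq_exp_1_eq_table: "jacobi_seq (exp 1) k = e_jacobi_seq_table ! (k mod 24)"
proof (cases k)
  case 0
  then show ?thesis
    by (simp add: jacobi_seq_def jac_sym_def cf_a_exp_1 e_quot_def e_jacobi_seq_table_def)
next
  case (Suc j)
  define r where "r = j mod 24"
  let ?t = "cf_t (exp 1) (Suc j)" and ?tt = "e_denom_mod8_table ! ((r + 1) mod 24)"
  have t: "?t mod 8 = ?tt"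
    by (simp only: cf_t_exp_1_mod_8 mod_24_Suc(1) r_def)
  have table: "e_jacobi_seq_table ! (k mod 24) = (if even ?tt then None
      else Some ((if even r then 1 else sign_mod4 ?tt) * e_jacobi_pair_table ! r))"
    using e_jacobi_seq_table_eq mod_24_Suc(1)[of j] Suc by (simp add: r_def Let_def)
  show ?thesis
  proof (cases "even ?t")
    case True
    then show ?thesis
      using t table even_mod_8_iff[of ?t] Suc by (simp add: jacobi_seq_def jac_sym_def)
  next
    case False
    have "jacobi (cf_s (exp 1) (Suc j)) ?t = jacobi ((-1) ^ j) ?t * jacobi (cf_t (exp 1) j) ?t"
      by (rule jacobi_of_det[OF cf_t_exp_1_pos False cf_t_exp_1_pos coprime_cf_t_Suc cf_det])
    moreover have "jacobi (cf_t (exp 1) j) ?t = e_jacobi_pair_table ! r"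
      using e_jacobi_pair_eq_table[of j] False by (simp add: jacobi_pair_def r_def)
    moreover have "jacobi ((-1) ^ j) ?t = (if even r then 1 else sign_mod4 ?tt)"
      using jacobi_one_left[OF cf_t_exp_1_pos False] jacobi_minus_one[OF cf_t_exp_1_pos False]
        sign_mod4_mod_8[of ?t] t
      by (simp add: r_def even_iff_mod_2_eq_zero mod_mod_cancel)
    ultimately show ?thesis
      using t table False even_mod_8_iff[of ?t] Suc by (simp add: jacobi_seq_def jac_sym_def)
  qed
qed

theorem theorem1:
  shows "(\<forall>k. jacobi_seq (exp 1) k = jacobi_seq (exp 1) (k + 24)) \<and>
         (\<forall>L::nat. L > 0 \<longrightarrow> (\<forall>k. jacobi_seq (exp 1) k = jacobi_seq (exp 1) (k + L)) \<longrightarrow> 24 \<le> L)"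
proof (intro conjI allI impI)
  show "jacobi_seq (exp 1) k = jacobi_seq (exp 1) (k + 24)" for k
    by (simp add: jacobi_seq_exp_1_eq_table)
next
  fix L :: nat
  assume "L > 0" and periodic: "\<forall>k. jacobi_seq (exp 1) k = jacobi_seq (exp 1) (k + L)"
  show "24 \<le> L"
  proof (rule ccontr)
    assume "\<not> 24 \<le> L"
    with \<open>L > 0\<close> obtain k where "e_jacobi_seq_table ! k \<noteq> e_jacobi_seq_table ! ((k + L) mod 24)" "k < 24"
      using e_jacobi_seq_table_aperiodic by fastforce
    with periodic[rule_format, of k] show False
      by (simp add: jacobi_seq_exp_1_eq_table)
  qed
qed

end
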